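(* Let $n$ be even and $F\colon\mathbb F_2^n\to\mathbb F_2^m$ be quadratic. If $W\le\mathbb F_2^m$ is a subspace of dimension at least $\frac n2+1$, then $|W\cap N_F|$ is odd.
   Context: $\langle\cdot,\cdot\rangle$ denotes standard dot products. Component functions: $F_b(x)=\langle b,F(x)\rangle$ for $b\in\mathbb F_2^m$. $F$ is quadratic if every component is a quadratic form plus an affine function over $\mathbb F_2$. $W_F(b,a)=\sum_{x\in\mathbb F_2^n}(-1)^{F_b(x)+\langle x,a\rangle}$. $F_b$ is bent if $|W_F(b,a)|=2^{n/2}$ for all $a\in\mathbb F_2^n$. $N_F=\{b\in\mathbb F_2^m\setminus\{0\}\colon F_b\text{ is not bent}\}$. *)

theory Defs
  imports "HOL-Analysis.Analysis" "HOL-Library.Z2"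
begin

text \<open>Vectors of F_2^n are modelled as bit ^ 'n with 'n a finite index type, n = CARD('n).\<close>

definition dotp :: "bit ^ 'n \<Rightarrow> bit ^ 'n \<Rightarrow> bit" where
  "dotp x y = (\<Sum>i\<in>UNIV. x $ i * y $ i)"

definition sgnbit :: "bit \<Rightarrow> int" where
  "sgnbit v = (if v = 0 then 1 else -1)"

definition component :: "(bit ^ 'n \<Rightarrow> bit ^ 'm) \<Rightarrow> bit ^ 'm \<Rightarrow> bit ^ 'n \<Rightarrow> bit" where
  "component F b x = dotp b (F x)"

definition quadratic_plus_affine :: "(bit ^ 'n \<Rightarrow> bit) \<Rightarrow> bool" where
  "quadratic_plus_affine f \<longleftrightarrow>
     (\<exists>(Q :: 'n \<Rightarrow> 'n \<Rightarrow> bit) (l :: bit ^ 'n) (c :: bit).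
        \<forall>x. f x = (\<Sum>i\<in>UNIV. \<Sum>j\<in>UNIV. Q i j * x $ i * x $ j) + dotp l x + c)"

definition quadratic_fun :: "(bit ^ 'n \<Rightarrow> bit ^ 'm) \<Rightarrow> bool" where
  "quadratic_fun F \<longleftrightarrow> (\<forall>b. quadratic_plus_affine (component F b))"

definition walsh :: "(bit ^ 'n \<Rightarrow> bit ^ 'm) \<Rightarrow> bit ^ 'm \<Rightarrow> bit ^ 'n \<Rightarrow> int" where
  "walsh F b a = (\<Sum>x\<in>UNIV. sgnbit (component F b x + dotp x a))"

text \<open>n is assumed even in the theorem, so 2^(n/2) = 2^(n div 2).\<close>
definition bent_component :: "(bit ^ 'n \<Rightarrow> bit ^ 'm) \<Rightarrow> bit ^ 'm \<Rightarrow> bool" where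
  "bent_component F b \<longleftrightarrow> (\<forall>a. \<bar>walsh F b a\<bar> = 2 ^ (CARD('n) div 2))"

definition nonbent_set :: "(bit ^ 'n \<Rightarrow> bit ^ 'm) \<Rightarrow> (bit ^ 'm) set" where
  "nonbent_set F = {b. b \<noteq> 0 \<and> \<not> bent_component F b}"

end

theory Submission
  imports Defs
begin

(* For quadratic F every component F_b has a second difference
   F_b(x + z) + F_b(x) + F_b(z) + F_b(0) that is a bilinear form <x, P_b z> with an
   alternating matrix P_b, and the Walsh spectrum of F_b is flat exactly when P_b is
   nonsingular. So F_b is bent iff det P_b = 1 in F_2.
   Over F_2 the determinant of an alternating matrix is the sum, over the fixed-point-free
   involutions p, of prod_i P_b(i, p i). Here P_b(i, j) = <b, D(i, j)> for the second
   differences D(i, j) of F itself at basis vectors, and D(i, p i) = D(p i, i); so each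
   term is a product of at most n/2 distinct linear forms in b. Summing it over a subspace W of dimension > n/2 gives 0: some nonzero u in W is
   orthogonal to all these forms, and b -> b + u pairs off the terms. Hence W contains an
   even number of bent components; |W| is even too, and b = 0 is not bent, so
   |W \<inter> N_F| = |W| - #bent - 1 is odd. *)

lemma UNIV_bit: "(UNIV :: bit set) = {0, 1}"
  by (auto intro: bit.exhaust)

instance bit :: finite
  by standard (simp add: UNIV_bit)

(* Reason about + and * on bit as field operations, not as XOR and AND. *)
declare add_bit_eq_xor [simp del] mult_bit_eq_and [simp del]

lemma card_bit [simp]: "CARD(bit) = 2"
  by (simp add: UNIV_bit)

lemma bit_add_self [simp]: "x + x = (0 :: bit)"
  by (cases x) simp_all

lemma bit_add_self_left: "x + (x + y) = (y :: bit)"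
  by (simp add: add.assoc [symmetric])

lemma bitvec_add_self [simp]: "x + x = (0 :: bit ^ 'n)"
  by (simp add: vec_eq_iff)

lemma bitvec_add_eq_0_iff: "x + y = (0 :: bit ^ 'n) \<longleftrightarrow> x = y"
  by (metis add.assoc add.right_neutral bitvec_add_self)

lemma of_nat_bit_eq_0_iff: "(of_nat k :: bit) = 0 \<longleftrightarrow> even k"
  by (induction k) auto

lemma card_image_le_half:
  assumes "finite X"
    and "\<And>x. x \<in> X \<Longrightarrow> g x \<in> X \<and> g x \<noteq> x \<and> h (g x) = h x"
  shows "2 * card (h ` X) \<le> card X"
proof -
  have "2 \<le> card {x \<in> X. h x = c}" if "c \<in> h ` X" for c
  proof -
    from that obtain x where "x \<in> X" "h x = c" by blast
    then have "{x, g x} \<subseteq> {x \<in> X. h x = c}" "g x \<noteq> x" using assms(2) by auto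
    then show ?thesis using card_mono[OF _ \<open>{x, g x} \<subseteq> _\<close>] \<open>finite X\<close> by simp
  qed
  then have "(\<Sum>c\<in>h ` X. 2) \<le> (\<Sum>c\<in>h ` X. card {x \<in> X. h x = c})"
    by (rule sum_mono)
  also have "\<dots> = card X"
    using sum.group[of X "h ` X" h "\<lambda>_. 1 :: nat"] \<open>finite X\<close> by simp
  finally show ?thesis by simp
qed

lemma dotp_commute: "dotp x y = dotp y x"
  unfolding dotp_def by (simp add: mult.commute)

lemma dotp_add_left: "dotp (x + y) z = dotp x z + dotp y z"
  unfolding dotp_def by (simp add: distrib_right sum.distrib)

lemma dotp_add_right: "dotp x (y + z) = dotp x y + dotp x z"
  unfolding dotp_def by (simp add: distrib_left sum.distrib)

lemma dotp_0_left [simp]: "dotp 0 y = 0"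
  unfolding dotp_def by simp

lemma dotp_0_right [simp]: "dotp x 0 = 0"
  unfolding dotp_def by simp

lemma sum_mult_axis: "(\<Sum>k\<in>UNIV. g k * axis j 1 $ k) = (g j :: 'a :: comm_semiring_1)"
  by (simp add: axis_def of_bool_def [symmetric])

lemma matrix_vector_mult_axis_nth: "(M *v axis j 1) $ i = (M $ i $ j :: 'a :: comm_semiring_1)"
  by (simp add: matrix_vector_mult_def sum_mult_axis)

lemma dotp_axis_left: "dotp (axis i 1) y = y $ i"
  unfolding dotp_def by (simp add: mult.commute sum_mult_axis)

lemma sgnbit_0 [simp]: "sgnbit 0 = 1" and sgnbit_1 [simp]: "sgnbit 1 = -1"
  by (simp_all add: sgnbit_def)

lemma sgnbit_add: "sgnbit (u + v) = sgnbit u * sgnbit v"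
  by (cases u; cases v) (simp_all add: sgnbit_def)

lemma sum_bitvec_translate: "(\<Sum>x\<in>UNIV. f (x + c)) = (\<Sum>x\<in>UNIV. f (x :: bit ^ 'n))"
  by (rule sum.reindex_bij_witness[of _ "\<lambda>x. x + c" "\<lambda>x. x + c"]) (auto simp: add.assoc)

lemma sum_sgnbit_dotp:
  "(\<Sum>a\<in>UNIV. sgnbit (dotp a v)) = (if v = 0 then 2 ^ CARD('n) else 0)"
  for v :: "bit ^ 'n"
proof (cases "v = 0")
  case True
  then show ?thesis by (simp add: UNIV_bit)
next
  case False
  then obtain i where i: "v $ i = 1"
    by (metis bit_not_zero_iff vec_eq_iff zero_index)
  let ?S = "\<Sum>a\<in>UNIV. sgnbit (dotp a v)"
  have "?S = (\<Sum>a\<in>UNIV. sgnbit (dotp (a + axis i 1) v))"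
    by (rule sum_bitvec_translate[symmetric])
  also have "\<dots> = - ?S"
    by (simp add: dotp_add_left dotp_axis_left i sgnbit_add sum_negf)
  finally show ?thesis
    using False by simp
qed

lemma sgnbit_fourier_inversion:
  fixes R :: "(bit ^ 'n) set" and g :: "bit ^ 'n \<Rightarrow> int"
  shows "(\<Sum>a\<in>UNIV. (\<Sum>z\<in>R. g z * sgnbit (dotp z a)) * sgnbit (dotp a w))
    = 2 ^ CARD('n) * (if w \<in> R then g w else 0)"
proof -
  have "(\<Sum>a\<in>UNIV. (\<Sum>z\<in>R. g z * sgnbit (dotp z a)) * sgnbit (dotp a w))
      = (\<Sum>z\<in>R. g z * (\<Sum>a\<in>UNIV. sgnbit (dotp a (z + w))))"
    unfolding sum_distrib_left sum_distrib_right dotp_add_right sgnbit_add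
    by (subst sum.swap) (simp add: dotp_commute mult_ac)
  also have "\<dots> = (\<Sum>z\<in>R. if z = w then 2 ^ CARD('n) * g w else 0)"
    by (intro sum.cong refl) (simp add: sum_sgnbit_dotp bitvec_add_eq_0_iff)
  finally show ?thesis
    by simp
qed

lemma quadratic_second_difference:
  fixes Q :: "'n::finite \<Rightarrow> 'n \<Rightarrow> bit"
  assumes f: "\<And>x. f x = (\<Sum>i\<in>UNIV. \<Sum>j\<in>UNIV. Q i j * x $ i * x $ j) + dotp l x + c"
  shows "f (x + z) + f x + f z + f 0 = dotp x ((\<chi> i j. Q i j + Q j i) *v z)"
proof -
  have "f (x + z) + f x + f z + f 0
      = (\<Sum>i\<in>UNIV. \<Sum>j\<in>UNIV. Q i j * x $ i * z $ j + Q i j * z $ i * x $ j)"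
    unfolding f by (simp add: algebra_simps sum.distrib dotp_add_right)
  also have "\<dots> = (\<Sum>i\<in>UNIV. \<Sum>j\<in>UNIV. Q i j * x $ i * z $ j + Q j i * x $ i * z $ j)"
    by (simp add: sum.distrib mult_ac) (rule sum.swap)
  also have "\<dots> = dotp x ((\<chi> i j. Q i j + Q j i) *v z)"
    unfolding dotp_def matrix_vector_mult_def by (simp add: algebra_simps sum_distrib_left)
  finally show ?thesis .
qed

definition polar :: "(bit ^ 'n \<Rightarrow> bit) \<Rightarrow> bit ^ 'n ^ 'n" where
  "polar f = (\<chi> i j. f (axis i 1 + axis j 1) + f (axis i 1) + f (axis j 1) + f 0)"

lemma quadratic_plus_affine_second_difference:
  assumes "quadratic_plus_affine f"
  shows "f (x + z) + f x + f z + f 0 = dotp x (polar f *v z)"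
proof -
  obtain Q l c where f: "\<And>x. f x = (\<Sum>i\<in>UNIV. \<Sum>j\<in>UNIV. Q i j * x $ i * x $ j) + dotp l x + c"
    using assms unfolding quadratic_plus_affine_def by blast
  have "polar f $ i $ j = Q i j + Q j i" for i j
    using quadratic_second_difference[OF f, of "axis i 1" "axis j 1"]
    by (simp add: polar_def dotp_axis_left matrix_vector_mult_axis_nth)
  then have "polar f = (\<chi> i j. Q i j + Q j i)"
    by (simp add: vec_eq_iff)
  then show ?thesis
    using quadratic_second_difference[OF f] by simp
qed

lemma walsh_square:
  fixes f :: "bit ^ 'n \<Rightarrow> bit" and M :: "bit ^ 'n ^ 'n"
  assumes second_difference: "\<And>x z. f (x + z) + f x + f z + f 0 = dotp x (M *v z)"
  shows "(\<Sum>x\<in>UNIV. sgnbit (f x + dotp x a))\<^sup>2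
    = 2 ^ CARD('n) * (\<Sum>z\<in>{z. M *v z = 0}. sgnbit (f z + f 0) * sgnbit (dotp z a))"
proof -
  let ?u = "\<lambda>x. f x + dotp x a"
  have u_sum: "?u x + ?u (z + x) = dotp x (M *v z) + (f z + f 0 + dotp z a)" for x z
    using second_difference [of x z, symmetric]
    by (simp add: dotp_add_left add_ac bit_add_self_left)
  then have sgnbit_product: "sgnbit (?u x) * sgnbit (?u (z + x))
      = sgnbit (dotp x (M *v z)) * (sgnbit (f z + f 0) * sgnbit (dotp z a))" for x z
    by (simp only: sgnbit_add [symmetric] add.assoc)
  have "(\<Sum>x\<in>UNIV. sgnbit (?u x))\<^sup>2 = (\<Sum>x\<in>UNIV. \<Sum>z\<in>UNIV. sgnbit (?u x) * sgnbit (?u (z + x)))"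
    unfolding power2_eq_square sum_product
    by (rule sum.cong [OF refl], rule sum_bitvec_translate [symmetric])
  also have "\<dots> = (\<Sum>z\<in>UNIV. (\<Sum>x\<in>UNIV. sgnbit (dotp x (M *v z))) * (sgnbit (f z + f 0) * sgnbit (dotp z a)))"
    by (subst sum.swap) (simp add: sgnbit_product sum_distrib_right)
  also have "\<dots> = 2 ^ CARD('n) * (\<Sum>z\<in>{z. M *v z = 0}. sgnbit (f z + f 0) * sgnbit (dotp z a))"
    by (simp add: sum_sgnbit_dotp if_distrib [of "\<lambda>t. t * _"] sum.If_cases sum_distrib_left)
  finally show ?thesis .
qed

lemma abs_eq_iff_power2: "0 \<le> k \<Longrightarrow> \<bar>w\<bar> = k \<longleftrightarrow> w\<^sup>2 = (k\<^sup>2 :: 'a :: linordered_idom)"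
  by (metis abs_ge_zero power2_abs power2_eq_iff_nonneg)

lemma bent_iff_kernel_trivial:
  fixes f :: "bit ^ 'n \<Rightarrow> bit" and M :: "bit ^ 'n ^ 'n"
  assumes second_difference: "\<And>x z. f (x + z) + f x + f z + f 0 = dotp x (M *v z)"
    and "even CARD('n)"
  shows "(\<forall>a. \<bar>\<Sum>x\<in>UNIV. sgnbit (f x + dotp x a)\<bar> = 2 ^ (CARD('n) div 2))
    \<longleftrightarrow> (\<forall>z. M *v z = 0 \<longrightarrow> z = 0)"
proof -
  let ?R = "{z. M *v z = 0}"
  let ?S = "\<lambda>a. \<Sum>z\<in>?R. sgnbit (f z + f 0) * sgnbit (dotp z a)"
  have "(2 :: int) ^ CARD('n) = (2 ^ (CARD('n) div 2))\<^sup>2"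
    using assms(2) by (simp flip: power_mult)
  then have bent_iff: "\<bar>\<Sum>x\<in>UNIV. sgnbit (f x + dotp x a)\<bar> = 2 ^ (CARD('n) div 2) \<longleftrightarrow> ?S a = 1" for a
    using walsh_square [OF second_difference, of a] by (simp add: abs_eq_iff_power2)
  show ?thesis
  proof
    assume bent: "\<forall>a. \<bar>\<Sum>x\<in>UNIV. sgnbit (f x + dotp x a)\<bar> = 2 ^ (CARD('n) div 2)"
    show "\<forall>z. M *v z = 0 \<longrightarrow> z = 0"
    proof (intro allI impI)
      fix w assume "M *v w = 0"
      then have "(\<Sum>a\<in>UNIV. ?S a * sgnbit (dotp a w)) = 2 ^ CARD('n) * sgnbit (f w + f 0)"
        by (simp add: sgnbit_fourier_inversion)
      moreover have "?S a = 1" for a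
        using bent bent_iff by blast
      ultimately have "(if w = 0 then 2 ^ CARD('n) else 0) = 2 ^ CARD('n) * sgnbit (f w + f 0)"
        by (simp add: sum_sgnbit_dotp)
      then show "w = 0"
        by (auto simp: sgnbit_def split: if_splits)
    qed
  next
    assume "\<forall>z. M *v z = 0 \<longrightarrow> z = 0"
    then have "?R = {0}" by auto
    then show "\<forall>a. \<bar>\<Sum>x\<in>UNIV. sgnbit (f x + dotp x a)\<bar> = 2 ^ (CARD('n) div 2)"
      using bent_iff by simp
  qed
qed

lemma det_ne_0_iff_kernel_trivial:
  "det (M :: 'a :: field ^ 'n ^ 'n) \<noteq> 0 \<longleftrightarrow> (\<forall>z. M *v z = 0 \<longrightarrow> z = 0)"
proof -
  have "det M \<noteq> 0 \<longleftrightarrow> inj ((*v) M)"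
    using det_nz_iff_inj_gen [of "(*v) M"] by simp
  also have "\<dots> \<longleftrightarrow> (\<forall>z. M *v z = 0 \<longrightarrow> z = 0)"
    by (rule vec.inj_iff_eq_0)
  finally show ?thesis .
qed

lemma bent_component_iff_det_polar:
  fixes F :: "bit ^ 'n \<Rightarrow> bit ^ 'm"
  assumes "even CARD('n)" and "quadratic_fun F"
  shows "bent_component F b \<longleftrightarrow> det (polar (component F b)) \<noteq> 0"
proof -
  have quadratic: "quadratic_plus_affine (component F b)"
    using assms(2) by (simp add: quadratic_fun_def)
  show ?thesis
    unfolding bent_component_def walsh_def det_ne_0_iff_kernel_trivial
    by (rule bent_iff_kernel_trivial [OF quadratic_plus_affine_second_difference [OF quadratic] assms(1)])
qed

definition fixpoint_free_involutions :: "('n \<Rightarrow> 'n) set" where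
  "fixpoint_free_involutions = {p. p permutes UNIV \<and> (\<forall>i. p (p i) = i \<and> p i \<noteq> i)}"

lemma det_bit_symmetric:
  fixes M :: "bit ^ 'n ^ 'n"
  assumes symmetric: "\<And>i j. M $ i $ j = M $ j $ i"
  shows "det M = (\<Sum>p\<in>{p. p permutes UNIV \<and> inv p = p}. \<Prod>i\<in>UNIV. M $ i $ p i)"
proof -
  let ?P = "{p. p permutes (UNIV :: 'n set)}"
  let ?t = "\<lambda>p. \<Prod>i\<in>UNIV. M $ i $ p i"
  have sign: "of_int (sign p) = (1 :: bit)" for p :: "'n \<Rightarrow> 'n"
    by (cases p rule: sign_cases) simp_all
  have t_inv: "?t (inv p) = ?t p" if "p permutes UNIV" for p
  proof -
    have "?t (inv p) = (\<Prod>i\<in>UNIV. M $ p i $ inv p (p i))"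
      using prod.permute [OF that, of "\<lambda>i. M $ i $ inv p i"] by (simp add: comp_def)
    also have "\<dots> = ?t p"
      using permutes_inverses(2) [OF that] symmetric by simp
    finally show ?thesis .
  qed
  have "(\<Sum>p\<in>?P - {p. inv p = p}. ?t p) = 0"
  proof (rule sum_involution_eq_0 [where h = inv])
    fix p assume "p \<in> ?P - {p. inv p = p}"
    then have p: "p permutes UNIV" "inv p \<noteq> p" by auto
    show "?t (inv p) + ?t p = 0" by (simp add: t_inv [OF p(1)])
    show "inv p \<in> ?P - {p. inv p = p}" using p permutes_inv permutes_inv_inv by fastforce
    show "inv (inv p) = p" using permutes_inv_inv [OF p(1)] .
    show "inv p \<noteq> p" using p(2) .
  qed
  then show ?thesis
    unfolding det_def sign using sum.Int_Diff [of ?P ?t "{p. inv p = p}"] by (simp add: Collect_conj_eq)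
qed

lemma det_bit_alternating:
  fixes M :: "bit ^ 'n ^ 'n"
  assumes symmetric: "\<And>i j. M $ i $ j = M $ j $ i" and zero_diagonal: "\<And>i. M $ i $ i = 0"
  shows "det M = (\<Sum>p\<in>fixpoint_free_involutions. \<Prod>i\<in>UNIV. M $ i $ p i)"
  unfolding det_bit_symmetric [OF symmetric]
proof (rule sum.mono_neutral_right)
  show "fixpoint_free_involutions \<subseteq> {p. p permutes UNIV \<and> inv p = p}"
    unfolding fixpoint_free_involutions_def by (auto intro: inv_equality)
  show "\<forall>p\<in>{p. p permutes UNIV \<and> inv p = p} - fixpoint_free_involutions. (\<Prod>i\<in>UNIV. M $ i $ p i) = 0"
  proof
    fix p :: "'n \<Rightarrow> 'n"
    assume p: "p \<in> {p. p permutes UNIV \<and> inv p = p} - fixpoint_free_involutions"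
    have "p (p i) = i" for i
      using p permutes_inverses(2) by fastforce
    with p obtain i where "p i = i"
      unfolding fixpoint_free_involutions_def by auto
    then have "M $ i $ p i = 0"
      using zero_diagonal by simp
    then show "(\<Prod>i\<in>UNIV. M $ i $ p i) = 0"
      by (intro prod_zero) auto
  qed
qed simp

lemma card_subspace_eq_power_dim:
  fixes W :: "('a :: {field, finite} ^ 'm) set"
  assumes "vec.subspace W"
  shows "card W = CARD('a) ^ vec.dim W"
proof -
  obtain B where B: "B \<subseteq> W" "vec.independent B" "W \<subseteq> vec.span B" "card B = vec.dim W"
    using vec.basis_exists by blast
  let ?combination = "\<lambda>u. \<Sum>v\<in>B. u v *s v"
  let ?coefficients = "PiE B (\<lambda>_. UNIV)"
  have "bij_betw ?combination ?coefficients W"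
  proof (rule bij_betw_imageI)
    show "inj_on ?combination ?coefficients"
    proof (rule inj_onI)
      fix u u' assume u: "u \<in> ?coefficients" "u' \<in> ?coefficients"
        and eq: "?combination u = ?combination u'"
      have independent: "\<forall>v\<in>B. w v = 0" if "(\<Sum>v\<in>B. w v *s v) = 0" for w
        using B(2) that unfolding vec.dependent_finite [OF finite] by blast
      have "\<forall>v\<in>B. u v - u' v = 0"
        using eq by (intro independent) (simp add: vec.scale_left_diff_distrib sum_subtractf)
      then show "u = u'"
        using u by (auto intro: PiE_ext)
    qed
    have "?combination u = ?combination (restrict u B)" for u
      by (intro sum.cong) auto
    then have "range ?combination = ?combination ` ?coefficients"
      by (auto intro: image_eqI [where x = "restrict _ B"])
    moreover have "vec.span B = W"
      using vec.span_subspace [OF B(1,3) assms] .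
    ultimately show "?combination ` ?coefficients = W"
      using vec.span_finite [OF finite, of B] by simp
  qed
  then show ?thesis
    using B(4) by (simp add: bij_betw_same_card [symmetric] card_PiE)
qed

lemma exists_nonzero_orthogonal_in_subspace:
  fixes W C :: "(bit ^ 'm) set"
  assumes "vec.subspace W" and "card C < vec.dim W"
  obtains u where "u \<in> W" "u \<noteq> 0" "\<And>c. c \<in> C \<Longrightarrow> dotp u c = 0"
proof -
  let ?dotps = "\<lambda>b. restrict (dotp b) C"
  have fewer_values: "card (PiE C (\<lambda>_. UNIV :: bit set)) < card W"
    using assms by (simp add: card_PiE card_subspace_eq_power_dim)
  have "\<not> inj_on ?dotps W"
  proof
    assume "inj_on ?dotps W"
    then have "card W \<le> card (PiE C (\<lambda>_. UNIV :: bit set))"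
      by (rule card_inj_on_le) auto
    with fewer_values show False
      by simp
  qed
  then obtain b b' where b: "b \<in> W" "b' \<in> W" "b \<noteq> b'" "?dotps b = ?dotps b'"
    unfolding inj_on_def by blast
  show ?thesis
  proof
    show "b + b' \<in> W" using vec.subspace_add [OF assms(1) b(1,2)] .
    show "b + b' \<noteq> 0" using b(3) by (simp add: bitvec_add_eq_0_iff)
    show "dotp (b + b') c = 0" if "c \<in> C" for c
      using fun_cong [OF b(4), of c] that by (simp add: dotp_add_left)
  qed
qed

lemma sum_subspace_prod_dotp_eq_0:
  fixes W C :: "(bit ^ 'm) set"
  assumes "vec.subspace W" and "card C < vec.dim W"
  shows "(\<Sum>b\<in>W. \<Prod>c\<in>C. dotp b c) = 0"
proof -
  obtain u where u: "u \<in> W" "u \<noteq> 0" "\<And>c. c \<in> C \<Longrightarrow> dotp u c = 0"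
    using exists_nonzero_orthogonal_in_subspace [OF assms] by blast
  show ?thesis
  proof (rule sum_involution_eq_0 [where h = "\<lambda>b. b + u"])
    fix b assume "b \<in> W"
    show "b + u \<in> W" using vec.subspace_add [OF assms(1) \<open>b \<in> W\<close> u(1)] .
    show "b + u + u = b" by (simp add: add.assoc)
    show "b + u \<noteq> b" using u(2) by (simp add: bitvec_add_eq_0_iff add.assoc)
    show "(\<Prod>c\<in>C. dotp (b + u) c) + (\<Prod>c\<in>C. dotp b c) = 0"
      by (simp add: dotp_add_left u(3))
  qed
qed

lemma prod_bit_image: "(\<Prod>i\<in>A. h (\<phi> i) :: bit) = (\<Prod>c\<in>\<phi> ` A. h c)" if "finite A"
proof -
  have "(\<Prod>i\<in>A. h (\<phi> i)) = 0 \<longleftrightarrow> (\<Prod>c\<in>\<phi> ` A. h c) = 0"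
    using that by (simp add: prod_zero_iff)
  then show ?thesis
    by (cases "\<Prod>i\<in>A. h (\<phi> i)"; cases "\<Prod>c\<in>\<phi> ` A. h c") simp_all
qed

lemma sum_subspace_det_polar_eq_0:
  fixes F :: "bit ^ 'n \<Rightarrow> bit ^ 'm"
  assumes "vec.subspace W" and "CARD('n) div 2 < vec.dim W"
  shows "(\<Sum>b\<in>W. det (polar (component F b))) = 0"
proof -
  define D where "D i j = F (axis i 1 + axis j 1) + F (axis i 1) + F (axis j 1) + F 0" for i j
  have polar_nth: "polar (component F b) $ i $ j = dotp b (D i j)" for b i j
    unfolding polar_def D_def component_def by (simp add: dotp_add_right)
  have D_sym: "D i j = D j i" for i j
    unfolding D_def by (simp add: add_ac)
  have "D i i = 0" for i
    unfolding D_def by (simp add: vec_eq_iff)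
  then have det_eq: "det (polar (component F b))
      = (\<Sum>p\<in>fixpoint_free_involutions. \<Prod>i\<in>UNIV. dotp b (D i (p i)))" for b
    using det_bit_alternating [of "polar (component F b)"] by (simp add: polar_nth D_sym)
  have "(\<Sum>b\<in>W. \<Prod>i\<in>UNIV. dotp b (D i (p i))) = 0" if "p \<in> fixpoint_free_involutions" for p
  proof -
    have p: "p (p i) = i" "p i \<noteq> i" for i
      using that unfolding fixpoint_free_involutions_def by auto
    have "2 * card ((\<lambda>i. D i (p i)) ` UNIV) \<le> CARD('n)"
      by (rule card_image_le_half [where g = p]) (use p D_sym in auto)
    then have "card ((\<lambda>i. D i (p i)) ` UNIV) < vec.dim W"
      using assms(2) by linarith
    moreover have "(\<Prod>i\<in>UNIV. dotp b (D i (p i))) = (\<Prod>c\<in>(\<lambda>i. D i (p i)) ` UNIV. dotp b c)" for b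
      by (rule prod_bit_image) simp
    ultimately show ?thesis
      using sum_subspace_prod_dotp_eq_0 [OF assms(1)] by simp
  qed
  then show ?thesis
    unfolding det_eq by (subst sum.swap) simp
qed

lemma even_card_bent_components:
  fixes F :: "bit ^ 'n \<Rightarrow> bit ^ 'm"
  assumes "even CARD('n)" and "quadratic_fun F"
    and "vec.subspace W" and "CARD('n) div 2 < vec.dim W"
  shows "even (card (W \<inter> {b. bent_component F b}))"
proof -
  have "det (polar (component F b)) = of_bool (bent_component F b)" for b
    using bent_component_iff_det_polar [OF assms(1,2), of b]
    by (cases "det (polar (component F b))") simp_all
  then show ?thesis
    using sum_subspace_det_polar_eq_0 [OF assms(3,4), of F] by (simp add: of_nat_bit_eq_0_iff)
qed

lemma not_bent_component_0: "\<not> bent_component (F :: bit ^ 'n \<Rightarrow> bit ^ 'm) 0"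
proof
  assume "bent_component F 0"
  then have "\<bar>walsh F 0 0\<bar> = 2 ^ (CARD('n) div 2)"
    unfolding bent_component_def by blast
  moreover have "walsh F 0 0 = 2 ^ CARD('n)"
    by (simp add: walsh_def component_def UNIV_bit)
  ultimately show False
    using zero_less_card_finite [where 'a = 'n] by simp
qed

theorem mainTheorem12:
  fixes F :: "bit ^ 'n \<Rightarrow> bit ^ 'm" and W :: "(bit ^ 'm) set"
  assumes "even CARD('n)"
    and "quadratic_fun F"
    and "vec.subspace W"
    and "vec.dim W \<ge> CARD('n) div 2 + 1"
  shows "odd (card (W \<inter> nonbent_set F))"
proof -
  let ?B = "W \<inter> {b. bent_component F b}"
  have zero: "0 \<in> W - ?B"
    using vec.subspace_0 [OF assms(3)] not_bent_component_0 by blast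
  have "W \<inter> nonbent_set F = W - ?B - {0}"
    by (auto simp: nonbent_set_def)
  then have "card (W \<inter> nonbent_set F) = card W - card ?B - 1"
    using zero by (simp add: card_Diff_subset)
  moreover have "card ?B < card W"
    using zero by (intro psubset_card_mono) auto
  moreover have "even (card W)"
    using assms(3,4) by (simp add: card_subspace_eq_power_dim)
  moreover have "even (card ?B)"
    using even_card_bent_components [OF assms(1-3)] assms(4) by simp
  ultimately show ?thesis
    by (simp add: even_diff_nat)
qed

end
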